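(* Let $G=Z_{2^{\lambda_1}}\times\cdots\times Z_{2^{\lambda_n}}$ with $\lambda_1\le\cdots\le\lambda_n$, and let $\mathbf m$ be a canonical tuple of $G$. Then the characteristic subgroups of $G$ below $\mathbf m$ are in one-to-one correspondence with the projection-surjective subgroups of $Z_2^r$, where $r$ is the number of nondegenerate coordinates of $\mathbf m$.
   Context: Set $\lambda_0=0$ and, for any tuple, $a_0=0$. Tuples are ordered componentwise; $\Lambda(G)=\{\mathbf a\in\mathbb Z^n:\mathbf 0\le\mathbf a\le(\lambda_1,\dots,\lambda_n)\}$. For $\mathbf a\in\Lambda(G)$, $T(\mathbf a)$ is the set of $(g_1,\dots,g_n)\in G$ with $|g_i|=2^{a_i}$ for all $i$. A tuple $\mathbf a\in\Lambda(G)$ is canonical if (I) $a_i\ge a_{i-1}$ for $i\in\{2,\dots,n\}$ and (II) $a_{i+1}-a_i\le\lambda_{i+1}-\lambda_i$ for $i\in\{1,\dots,n-1\}$. A canonical tuple $\mathbf a$ is degenerate at coordinate $i\in\{1,\dots,n\}$ if $a_i=a_{i-1}$, or ($i\le n-1$ and) $a_{i+1}-a_i=\lambda_{i+1}-\lambda_i$; otherwise $i$ is a nondegenerate coordinate. For a characteristic subgroup $H$ of $G$, define $\mathbf m$ by $m_i=\max\{a_i:\mathbf a\in\Lambda(G),\ T(\mathbf a)\subseteq H\}$; $H$ is then called a characteristic subgroup below $\mathbf m$. A subgroup $K$ of a direct product $K_1\times\cdots\times K_l$ is projection-surjective if its projection onto each factor $K_i$ is all of $K_i$. *)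

theory Defs
  imports "HOL-Algebra.Algebra"
begin

definition Gp :: "nat \<Rightarrow> (nat \<Rightarrow> nat) \<Rightarrow> (nat \<Rightarrow> int) monoid" where
  "Gp n lam = product_group {1..n} (\<lambda>i. integer_mod_group (2 ^ lam i))"

definition characteristic :: "'a set \<Rightarrow> ('a, 'b) monoid_scheme \<Rightarrow> bool" where
  "characteristic H G \<longleftrightarrow> subgroup H G \<and> (\<forall>\<phi>\<in>iso G G. \<phi> ` H = H)"

definition LambdaG :: "nat \<Rightarrow> (nat \<Rightarrow> nat) \<Rightarrow> (nat \<Rightarrow> nat) set" where
  "LambdaG n lam = {a. (\<forall>i\<in>{1..n}. a i \<le> lam i) \<and> (\<forall>i. i \<notin> {1..n} \<longrightarrow> a i = 0)}"

definition Tset :: "nat \<Rightarrow> (nat \<Rightarrow> nat) \<Rightarrow> (nat \<Rightarrow> nat) \<Rightarrow> (nat \<Rightarrow> int) set" where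
  "Tset n lam a = {g \<in> carrier (Gp n lam).
      \<forall>i\<in>{1..n}. group.ord (integer_mod_group (2 ^ lam i)) (g i) = 2 ^ a i}"

text \<open>Convention a_0 = 0.\<close>
definition prev :: "(nat \<Rightarrow> nat) \<Rightarrow> nat \<Rightarrow> nat" where
  "prev a i = (if i = 1 then 0 else a (i - 1))"

definition canonical :: "nat \<Rightarrow> (nat \<Rightarrow> nat) \<Rightarrow> (nat \<Rightarrow> nat) \<Rightarrow> bool" where
  "canonical n lam a \<longleftrightarrow> a \<in> LambdaG n lam
     \<and> (\<forall>i\<in>{2..n}. a i \<ge> a (i - 1))
     \<and> (\<forall>i\<in>{1..n-1}. int (a (i + 1)) - int (a i) \<le> int (lam (i + 1)) - int (lam i))"

definition degenerate_at :: "nat \<Rightarrow> (nat \<Rightarrow> nat) \<Rightarrow> (nat \<Rightarrow> nat) \<Rightarrow> nat \<Rightarrow> bool" where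
  "degenerate_at n lam a i \<longleftrightarrow> a i = prev a i
     \<or> (i \<le> n - 1 \<and> int (a (i + 1)) - int (a i) = int (lam (i + 1)) - int (lam i))"

definition nondeg_count :: "nat \<Rightarrow> (nat \<Rightarrow> nat) \<Rightarrow> (nat \<Rightarrow> nat) \<Rightarrow> nat" where
  "nondeg_count n lam a = card {i \<in> {1..n}. \<not> degenerate_at n lam a i}"

definition char_below :: "nat \<Rightarrow> (nat \<Rightarrow> nat) \<Rightarrow> (nat \<Rightarrow> nat) \<Rightarrow> (nat \<Rightarrow> int) set \<Rightarrow> bool" where
  "char_below n lam m H \<longleftrightarrow> characteristic H (Gp n lam)
     \<and> (\<forall>i\<in>{1..n}. m i = Max {a i | a. a \<in> LambdaG n lam \<and> Tset n lam a \<subseteq> H})"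

definition Z2pow :: "nat \<Rightarrow> (nat \<Rightarrow> int) monoid" where
  "Z2pow r = product_group {1..r} (\<lambda>_. integer_mod_group 2)"

definition proj_surjective :: "nat \<Rightarrow> (nat \<Rightarrow> int) set \<Rightarrow> bool" where
  "proj_surjective r K \<longleftrightarrow> subgroup K (Z2pow r)
     \<and> (\<forall>i\<in>{1..r}. (\<lambda>k. k i) ` K = carrier (integer_mod_group 2))"

end

theory Submission
  imports Defs
begin

text \<open>Let e_i(g) be the exponent with |g_i| = 2^e_i(g), let L be the subgroup of all g with
  e_i(g) \<le> m_i for every i, and let M be defined in the same way with m_i lowered by one at each
  nondegenerate coordinate. Every characteristic subgroup H below m satisfies M \<subseteq> H \<subseteq> L.
  The upper bound holds because odd diagonal scalings act transitively on each T(a). For the lower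
  bound, H contains, in each cyclic factor j, an element of exponent at least the bound defining M:
  it is \<phi>(h) h^-1 for a suitable h \<in> H, with \<phi> a shear from a neighbouring coordinate when j is
  degenerate, and the negation of coordinate j when j is nondegenerate.

  Recording, at each nondegenerate coordinate i, the bit of g_i at level m_i identifies L/M with
  Z_2^r. Every automorphism preserves these bits on L, since at a nondegenerate coordinate its
  diagonal matrix entry is odd and all other contributions are divisible by a higher power of 2.
  Hence H \<mapsto> (image of H in Z_2^r) is a bijection, inverted by taking preimages in L, and the
  condition that the maxima defining H are exactly m becomes projection-surjectivity.\<close>

section \<open>The 2-adic order exponent\<close>

text \<open>The order of x in Z/2^l is 2^(ord_exp l x) (lemma ord_integer_mod_group_pow2).\<close>

definition ord_exp :: "nat \<Rightarrow> int \<Rightarrow> nat" where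
  "ord_exp l x = (LEAST a. (2::int)^l dvd 2^a * x)"

lemma pow2_dvd_pow2_iff: "((2::int)^a dvd 2^b) \<longleftrightarrow> a \<le> b"
proof
  assume "(2::int)^a dvd 2^b"
  hence "(2::int)^a \<le> 2^b" by (simp add: zdvd_imp_le)
  thus "a \<le> b" by simp
qed (simp add: le_imp_power_dvd)

lemma ord_exp_le_iff: "ord_exp l x \<le> b \<longleftrightarrow> (2::int)^l dvd 2^b * x"
proof
  have least: "(2::int)^l dvd 2^(ord_exp l x) * x"
    unfolding ord_exp_def by (rule LeastI[where k = l]) simp
  assume "ord_exp l x \<le> b"
  hence "(2::int)^b * x = 2^(b - ord_exp l x) * (2^(ord_exp l x) * x)"
    by (simp add: mult.assoc flip: power_add)
  thus "(2::int)^l dvd 2^b * x" using least by (metis dvd_mult)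
next
  assume "(2::int)^l dvd 2^b * x"
  thus "ord_exp l x \<le> b" unfolding ord_exp_def by (rule Least_le)
qed

lemma ord_exp_le: "ord_exp l x \<le> l"
  by (simp add: ord_exp_le_iff)

lemma ord_exp_eqI:
  assumes "\<And>b. ord_exp l x \<le> b \<longleftrightarrow> a \<le> b"
  shows "ord_exp l x = a"
  using assms by (metis le_antisym order_refl)

lemma ord_exp_cong:
  assumes "\<And>b. (2::int)^l dvd 2^b * x \<longleftrightarrow> (2::int)^l dvd 2^b * y"
  shows "ord_exp l x = ord_exp l y"
  by (rule ord_exp_eqI) (simp add: ord_exp_le_iff assms)

lemma ord_exp_mod [simp]: "ord_exp l (x mod 2^l) = ord_exp l x"
proof (rule ord_exp_cong)
  fix b
  have "2^b * (x mod 2^l) mod 2^l = 2^b * x mod (2::int)^l"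
    by (simp add: mod_mult_right_eq)
  thus "(2::int)^l dvd 2^b * (x mod 2^l) \<longleftrightarrow> 2^l dvd 2^b * x"
    by (metis dvd_eq_mod_eq_0)
qed

lemma ord_exp_uminus [simp]: "ord_exp l (- x) = ord_exp l x"
  by (rule ord_exp_cong) simp

lemma ord_exp_0 [simp]: "ord_exp l 0 = 0"
  using ord_exp_le_iff[of l 0 0] by simp

lemma ord_exp_le_iff_dvd: "b \<le> l \<Longrightarrow> ord_exp l x \<le> b \<longleftrightarrow> (2::int)^(l - b) dvd x"
proof -
  assume "b \<le> l"
  hence "(2::int)^l = 2^b * 2^(l - b)" by (simp flip: power_add)
  thus ?thesis by (simp add: ord_exp_le_iff)
qed

lemma ord_exp_less_iff_dvd:
  "1 \<le> e \<Longrightarrow> e \<le> l \<Longrightarrow> ord_exp l x < e \<longleftrightarrow> (2::int)^(l - e + 1) dvd x"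
proof -
  assume e: "1 \<le> e" "e \<le> l"
  hence "ord_exp l x < e \<longleftrightarrow> ord_exp l x \<le> e - 1" "l - (e - 1) = l - e + 1" by auto
  thus ?thesis using ord_exp_le_iff_dvd[of "e - 1" l x] e by simp
qed

lemma ord_exp_eq_0_iff: "0 \<le> x \<Longrightarrow> x < 2^l \<Longrightarrow> ord_exp l x = 0 \<longleftrightarrow> x = 0"
  using ord_exp_le_iff_dvd[of 0 l x] zdvd_not_zless[of x "2^l"] by force

lemma ord_exp_pow2: "a \<le> l \<Longrightarrow> ord_exp l (2^(l - a)) = a"
  by (rule ord_exp_eqI) (auto simp: ord_exp_le_iff pow2_dvd_pow2_iff simp flip: power_add)

lemma ord_exp_minus_double: "ord_exp l (-2 * x) = ord_exp l x - 1"
proof (rule ord_exp_eqI)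
  fix b
  have "ord_exp l (-2 * x) \<le> b \<longleftrightarrow> ord_exp l x \<le> Suc b"
    unfolding ord_exp_le_iff by (simp add: algebra_simps)
  thus "ord_exp l (-2 * x) \<le> b \<longleftrightarrow> ord_exp l x - 1 \<le> b" by arith
qed

lemma ord_exp_smaller_modulus:
  assumes "l \<le> l'"
  shows "ord_exp l x = ord_exp l' x - (l' - l)"
proof (rule ord_exp_eqI)
  fix b
  have "(2::int)^l' = 2^(l' - l) * 2^l" "(2::int)^(b + (l' - l)) = 2^(l' - l) * 2^b"
    using assms by (simp_all flip: power_add)
  hence "ord_exp l x \<le> b \<longleftrightarrow> ord_exp l' x \<le> b + (l' - l)"
    unfolding ord_exp_le_iff by (simp add: mult.assoc)
  thus "ord_exp l x \<le> b \<longleftrightarrow> ord_exp l' x - (l' - l) \<le> b" by linarith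
qed

lemma ord_exp_pow2_mult:
  assumes "l \<le> l'"
  shows "ord_exp l' (2^(l' - l) * x) = ord_exp l x"
proof (rule ord_exp_eqI)
  fix b
  have "(2::int)^l' = 2^(l' - l) * 2^l" using assms by (simp flip: power_add)
  thus "ord_exp l' (2^(l' - l) * x) \<le> b \<longleftrightarrow> ord_exp l x \<le> b"
    unfolding ord_exp_le_iff by (simp add: algebra_simps)
qed

lemma ord_integer_mod_group_pow2:
  assumes "0 \<le> x" "x < 2^l"
  shows "group.ord (integer_mod_group (2^l)) x = 2^(ord_exp l x)"
proof -
  interpret Z: group "integer_mod_group (2^l)" by simp
  have x: "x \<in> carrier (integer_mod_group (2^l))"
    using assms by (simp add: carrier_integer_mod_group)
  have ord_dvd_iff: "Z.ord x dvd N \<longleftrightarrow> (2::int)^l dvd int N * x" for N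
    using Z.pow_eq_id[OF x] by (simp add: dvd_eq_mod_eq_0)
  have "Z.ord x dvd 2^l" using ord_dvd_iff[of "2^l"] by simp
  then obtain k where k: "Z.ord x = 2^k"
    using divides_primepow_nat[of 2] by auto
  have "ord_exp l x = k"
  proof (rule ord_exp_eqI)
    fix b
    show "ord_exp l x \<le> b \<longleftrightarrow> k \<le> b"
      using ord_dvd_iff[of "2^b"] k dvd_power_iff_le[of 2 k b] by (simp add: ord_exp_le_iff)
  qed
  thus ?thesis using k by simp
qed

lemma ord_exp_pos_decomp:
  assumes "0 < ord_exp l x"
  obtains a where "x = 2^(l - ord_exp l x) * a" "odd a"
proof -
  define e where "e = ord_exp l x"
  have e: "1 \<le> e" "e \<le> l" using assms ord_exp_le unfolding e_def by (auto simp: Suc_le_eq)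
  obtain a where a: "x = 2^(l - e) * a"
    using ord_exp_le_iff_dvd[OF e(2), of x] unfolding e_def by auto
  have "\<not> (2::int)^(l - e + 1) dvd x"
    using ord_exp_less_iff_dvd[OF e, of x] unfolding e_def by simp
  hence "odd a" unfolding a by (auto simp: power_add)
  thus thesis using that a unfolding e_def by blast
qed

lemma odd_inverse_mod_pow2:
  assumes "odd (u::int)"
  obtains v where "odd v" "(u * v) mod 2^l = 1 mod 2^l"
proof -
  have "gcd u ((2::int)^Suc l) = 1" using assms by simp
  then obtain v w where "v * u + w * (2::int)^Suc l = 1" using bezout_int[of u "2^Suc l"] by auto
  hence uv: "u * v = 1 + (- (2 * w)) * 2^l" by (simp add: algebra_simps)
  have "odd (u * v)" unfolding uv by simp
  hence "odd v" by simp
  moreover have "(u * v) mod 2^l = 1 mod 2^l" unfolding uv by (rule mod_mult_self1)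
  ultimately show thesis by (rule that)
qed

lemma odd_mult_mod_pow2_cancel:
  assumes "odd (u::int)" "(u * x) mod 2^l = (u * y) mod 2^l"
  shows "x mod 2^l = y mod 2^l"
proof -
  obtain v where v: "(u * v) mod 2^l = 1 mod 2^l" using odd_inverse_mod_pow2[OF assms(1)] by blast
  have inv: "(v * ((u * z) mod 2^l)) mod 2^l = z mod 2^l" for z
  proof -
    have "(v * ((u * z) mod 2^l)) mod 2^l = (z * ((u * v) mod 2^l)) mod 2^l"
      by (simp add: mod_mult_right_eq algebra_simps)
    also have "\<dots> = z mod 2^l" using v by (simp add: mod_mult_right_eq)
    finally show ?thesis .
  qed
  show ?thesis using inv[of x] inv[of y] assms(2) by simp
qed

lemma odd_multiplier_mod_pow2:
  assumes "odd a"
  obtains v where "odd v" "\<And>b. (b * v * (2^s * a)) mod 2^l = (2^s * b) mod (2::int)^l"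
proof -
  obtain v where v: "odd v" "(a * v) mod 2^l = 1 mod 2^l" using odd_inverse_mod_pow2[OF assms] by blast
  have "(b * v * (2^s * a)) mod 2^l = (2^s * b) mod (2::int)^l" for b
  proof -
    have "(b * v * (2^s * a)) mod 2^l = (2^s * b * (a * v)) mod (2::int)^l"
      by (simp add: algebra_simps)
    also have "\<dots> = (2^s * b * ((a * v) mod 2^l)) mod 2^l"
      by (simp add: mod_mult_right_eq)
    also have "\<dots> = (2^s * b) mod 2^l" using v(2) by (simp add: mod_mult_right_eq)
    finally show ?thesis .
  qed
  thus thesis using that v(1) by blast
qed

lemma ord_exp_le_imp_multiple:
  assumes "ord_exp l y \<le> ord_exp l x"
  obtains c where "(c * x) mod 2^l = y mod 2^l"
proof (cases "ord_exp l x = 0")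
  case True
  hence "(2::int)^l dvd y" using assms ord_exp_le_iff[of l y 0] by simp
  thus thesis using that[of 0] by simp
next
  case False
  define s where "s = l - ord_exp l x"
  obtain a where x: "x = 2^s * a" "odd a"
    using ord_exp_pos_decomp[of l x] False unfolding s_def by auto
  have "(2::int)^s dvd y"
    using ord_exp_le_iff_dvd[of "ord_exp l x" l y] assms ord_exp_le unfolding s_def by simp
  then obtain b where y: "y = 2^s * b" by blast
  obtain v where "\<And>b. (b * v * (2^s * a)) mod 2^l = (2^s * b) mod 2^l"
    using odd_multiplier_mod_pow2[OF x(2)] by blast
  thus thesis using that[of "b * v"] x(1) y by simp
qed

lemma ord_exp_eq_imp_odd_multiple:
  assumes "ord_exp l x = ord_exp l y"
  obtains u where "odd u" "(u * x) mod 2^l = y mod 2^l"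
proof (cases "ord_exp l x = 0")
  case True
  hence "(2::int)^l dvd x" "(2::int)^l dvd y"
    using assms ord_exp_le_iff[of l x 0] ord_exp_le_iff[of l y 0] by auto
  thus thesis using that[of 1] by simp
next
  case False
  define s where "s = l - ord_exp l x"
  obtain a where x: "x = 2^s * a" "odd a"
    using ord_exp_pos_decomp[of l x] False unfolding s_def by auto
  obtain b where y: "y = 2^s * b" "odd b"
    using ord_exp_pos_decomp[of l y] False assms unfolding s_def by auto
  obtain v where "odd v" "\<And>b. (b * v * (2^s * a)) mod 2^l = (2^s * b) mod 2^l"
    using odd_multiplier_mod_pow2[OF x(2)] by blast
  thus thesis using that[of "b * v"] x(1) y by simp
qed

text \<open>If ord_exp l x \<le> e, then level_bit l e x is the parity of the coefficient of 2^(l - e) in x.\<close>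

definition level_bit :: "nat \<Rightarrow> nat \<Rightarrow> int \<Rightarrow> int" where
  "level_bit l e x = (if ord_exp l x < e then 0 else 1)"

lemma level_bit_add:
  assumes "1 \<le> e" "e \<le> l" "ord_exp l x \<le> e" "ord_exp l y \<le> e"
  shows "level_bit l e ((x + y) mod 2^l) = (level_bit l e x + level_bit l e y) mod 2"
proof -
  obtain a b where ab: "x = 2^(l - e) * a" "y = 2^(l - e) * b"
    using assms ord_exp_le_iff_dvd by (meson dvdE)
  have bit: "level_bit l e (2^(l - e) * z) = z mod 2" for z
    unfolding level_bit_def ord_exp_less_iff_dvd[OF assms(1,2)]
    by (simp add: power_add even_iff_mod_2_eq_zero)
  have "level_bit l e ((x + y) mod 2^l) = level_bit l e (2^(l - e) * (a + b))"
    unfolding level_bit_def ab by (simp add: algebra_simps)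
  thus ?thesis unfolding bit ab by (simp add: mod_add_eq)
qed


section \<open>The group Gp n lam and two families of automorphisms\<close>

definition single :: "nat \<Rightarrow> nat \<Rightarrow> int \<Rightarrow> (nat \<Rightarrow> int)" where
  "single n j v = (\<lambda>i\<in>{1..n}. if i = j then v else 0)"

lemma carrier_Gp: "carrier (Gp n lam) = (\<Pi>\<^sub>E i\<in>{1..n}. {0..<2^lam i})"
  by (simp add: Gp_def carrier_integer_mod_group)

lemma mult_Gp: "x \<otimes>\<^bsub>Gp n lam\<^esub> y = (\<lambda>i\<in>{1..n}. (x i + y i) mod 2^lam i)"
  by (simp add: Gp_def)

lemma one_Gp: "\<one>\<^bsub>Gp n lam\<^esub> = (\<lambda>i\<in>{1..n}. 0)"
  by (simp add: Gp_def)

lemma group_Gp: "group (Gp n lam)"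
  by (simp add: Gp_def)

lemma finite_carrier_Gp: "finite (carrier (Gp n lam))"
  by (simp add: carrier_Gp finite_PiE)

lemma Gp_memD: "x \<in> carrier (Gp n lam) \<Longrightarrow> i \<in> {1..n} \<Longrightarrow> 0 \<le> x i \<and> x i < 2^lam i"
  by (auto simp: carrier_Gp PiE_iff)

lemma Gp_mem_mod: "x \<in> carrier (Gp n lam) \<Longrightarrow> i \<in> {1..n} \<Longrightarrow> x i mod 2^lam i = x i"
  using Gp_memD by simp

lemma Gp_memI:
  assumes "\<And>i. i \<in> {1..n} \<Longrightarrow> 0 \<le> x i \<and> x i < 2^lam i"
    and "\<And>i. i \<notin> {1..n} \<Longrightarrow> x i = undefined"
  shows "x \<in> carrier (Gp n lam)"
  unfolding carrier_Gp by (rule PiE_I) (use assms in auto)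

lemma restrict_mod_in_Gp: "(\<lambda>i\<in>{1..n}. f i mod 2^lam i) \<in> carrier (Gp n lam)"
  by (rule Gp_memI) auto

lemma single_in_Gp: "0 \<le> v \<Longrightarrow> v < 2^lam j \<Longrightarrow> single n j v \<in> carrier (Gp n lam)"
  by (rule Gp_memI) (auto simp: single_def)

lemma Gp_eqI:
  "x \<in> carrier (Gp n lam) \<Longrightarrow> y \<in> carrier (Gp n lam) \<Longrightarrow> (\<And>i. i \<in> {1..n} \<Longrightarrow> x i = y i) \<Longrightarrow> x = y"
  unfolding carrier_Gp by (rule PiE_ext)

lemma inv_Gp:
  assumes "x \<in> carrier (Gp n lam)"
  shows "inv\<^bsub>Gp n lam\<^esub> x = (\<lambda>i\<in>{1..n}. (- x i) mod 2^lam i)"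
proof -
  have "inv\<^bsub>Gp n lam\<^esub> x = (\<lambda>i\<in>{1..n}. inv\<^bsub>integer_mod_group (2^lam i)\<^esub> x i)"
    using assms unfolding carrier_Gp Gp_def
    by (subst inv_product_group) (auto simp: carrier_integer_mod_group)
  also have "\<dots> = (\<lambda>i\<in>{1..n}. (- x i) mod 2^lam i)"
    using Gp_memD[OF assms] by (intro restrict_ext) (simp add: inv_integer_mod_group carrier_integer_mod_group)
  finally show ?thesis .
qed

lemma pow_Gp:
  assumes "x \<in> carrier (Gp n lam)"
  shows "x [^]\<^bsub>Gp n lam\<^esub> (t::nat) = (\<lambda>i\<in>{1..n}. (int t * x i) mod 2^lam i)"
proof (induction t)
  case 0
  show ?case by (simp add: one_Gp)
next
  case (Suc t)
  interpret group "Gp n lam" by (rule group_Gp)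
  have "x [^]\<^bsub>Gp n lam\<^esub> Suc t = x [^]\<^bsub>Gp n lam\<^esub> t \<otimes>\<^bsub>Gp n lam\<^esub> x" by simp
  also have "\<dots> = (\<lambda>i\<in>{1..n}. (int (Suc t) * x i) mod 2^lam i)"
    unfolding Suc.IH mult_Gp
    by (rule restrict_ext) (simp add: mod_add_right_eq algebra_simps)
  finally show ?case .
qed

lemma single_0: "single n j 0 = \<one>\<^bsub>Gp n lam\<^esub>"
  unfolding single_def one_Gp by (rule restrict_ext) simp

lemma single_pow:
  assumes "0 \<le> v" "v < 2^lam j"
  shows "single n j v [^]\<^bsub>Gp n lam\<^esub> (t::nat) = single n j ((int t * v) mod 2^lam j)"
proof -
  have "single n j v [^]\<^bsub>Gp n lam\<^esub> t = (\<lambda>i\<in>{1..n}. (int t * single n j v i) mod 2^lam i)"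
    by (rule pow_Gp[OF single_in_Gp[where lam = lam and j = j, OF assms]])
  also have "\<dots> = single n j ((int t * v) mod 2^lam j)"
    unfolding single_def by (rule restrict_ext) simp
  finally show ?thesis .
qed

lemma subgroup_nat_pow_closed:
  assumes "group G" "subgroup H G" "h \<in> H"
  shows "h [^]\<^bsub>G\<^esub> (t::nat) \<in> H"
proof -
  interpret group G by fact
  have "h [^]\<^bsub>G\<^esub> int t \<in> H" by (rule subgroup_int_pow_closed[OF assms(2,3)])
  thus ?thesis by (simp add: int_pow_int)
qed

lemma iso_Gp_of_inj_hom:
  assumes "h \<in> hom (Gp n lam) (Gp n lam)" "inj_on h (carrier (Gp n lam))"
  shows "h \<in> iso (Gp n lam) (Gp n lam)"
proof -
  have "h ` carrier (Gp n lam) \<subseteq> carrier (Gp n lam)" using assms(1) by (auto simp: hom_def)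
  hence "h ` carrier (Gp n lam) = carrier (Gp n lam)"
    using endo_inj_surj[OF finite_carrier_Gp _ assms(2)] by blast
  thus ?thesis using assms by (simp add: iso_def bij_betw_def)
qed

lemma endo_Gp_isoI:
  assumes "\<And>x. x \<in> carrier (Gp n lam) \<Longrightarrow> h x \<in> carrier (Gp n lam)"
    and "\<And>x y. x \<in> carrier (Gp n lam) \<Longrightarrow> y \<in> carrier (Gp n lam) \<Longrightarrow>
           h (x \<otimes>\<^bsub>Gp n lam\<^esub> y) = h x \<otimes>\<^bsub>Gp n lam\<^esub> h y"
    and "inj_on h (carrier (Gp n lam))"
  shows "h \<in> iso (Gp n lam) (Gp n lam)"
  using assms by (intro iso_Gp_of_inj_hom) (auto simp: hom_def)

definition scale_aut :: "nat \<Rightarrow> (nat \<Rightarrow> nat) \<Rightarrow> (nat \<Rightarrow> int) \<Rightarrow> (nat \<Rightarrow> int) \<Rightarrow> (nat \<Rightarrow> int)" where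
  "scale_aut n lam u x = (\<lambda>i\<in>{1..n}. (u i * x i) mod 2^lam i)"

definition shear_aut :: "nat \<Rightarrow> (nat \<Rightarrow> nat) \<Rightarrow> nat \<Rightarrow> nat \<Rightarrow> int \<Rightarrow> (nat \<Rightarrow> int) \<Rightarrow> (nat \<Rightarrow> int)" where
  "shear_aut n lam j k c x =
     (\<lambda>i\<in>{1..n}. if i = k then (x k + c * x j) mod 2^lam k else x i)"

lemma scale_aut_iso:
  assumes "\<And>i. i \<in> {1..n} \<Longrightarrow> odd (u i)"
  shows "scale_aut n lam u \<in> iso (Gp n lam) (Gp n lam)"
proof (rule endo_Gp_isoI)
  show "scale_aut n lam u x \<in> carrier (Gp n lam)" for x
    unfolding scale_aut_def by (rule restrict_mod_in_Gp)
  show "scale_aut n lam u (x \<otimes>\<^bsub>Gp n lam\<^esub> y) = scale_aut n lam u x \<otimes>\<^bsub>Gp n lam\<^esub> scale_aut n lam u y" for x y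
    unfolding scale_aut_def mult_Gp
    by (rule restrict_ext) (simp add: mod_mult_right_eq mod_add_eq distrib_left)
  show "inj_on (scale_aut n lam u) (carrier (Gp n lam))"
  proof (rule inj_onI)
    fix x y
    assume xy: "x \<in> carrier (Gp n lam)" "y \<in> carrier (Gp n lam)" "scale_aut n lam u x = scale_aut n lam u y"
    show "x = y"
    proof (rule Gp_eqI[OF xy(1,2)])
      fix i assume i: "i \<in> {1..n}"
      have "(u i * x i) mod 2^lam i = (u i * y i) mod 2^lam i"
        using fun_cong[OF xy(3), of i] i by (simp add: scale_aut_def)
      hence "x i mod 2^lam i = y i mod 2^lam i" using odd_mult_mod_pow2_cancel assms i by blast
      thus "x i = y i" using Gp_mem_mod xy i by metis
    qed
  qed
qed

lemma mod_mult_mod_dvd: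
  assumes "(p::int) dvd c * q"
  shows "(c * (z mod q)) mod p = (c * z) mod p"
proof -
  obtain d where "c * q = p * d" using assms by blast
  hence "c * (z mod q) = c * z + (- (z div q) * d) * p"
    by (simp add: algebra_simps minus_div_mult_eq_mod[symmetric])
  thus ?thesis by (simp only: mod_mult_self1)
qed

text \<open>The divisibility hypothesis makes x \<mapsto> c * x j (mod 2^lam k) well defined on Z/2^lam j.\<close>

lemma shear_aut_iso:
  assumes "j \<in> {1..n}" "k \<in> {1..n}" "j \<noteq> k" "(2::int)^lam k dvd c * 2^lam j"
  shows "shear_aut n lam j k c \<in> iso (Gp n lam) (Gp n lam)"
proof (rule endo_Gp_isoI)
  show "shear_aut n lam j k c x \<in> carrier (Gp n lam)" if "x \<in> carrier (Gp n lam)" for x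
    by (rule Gp_memI) (use that Gp_memD in \<open>auto simp: shear_aut_def\<close>)
  show "shear_aut n lam j k c (x \<otimes>\<^bsub>Gp n lam\<^esub> y) =
      shear_aut n lam j k c x \<otimes>\<^bsub>Gp n lam\<^esub> shear_aut n lam j k c y" for x y
  proof -
    have "((x k + y k) mod 2^lam k + c * ((x j + y j) mod 2^lam j)) mod 2^lam k
        = ((x k + y k) + (c * ((x j + y j) mod 2^lam j)) mod 2^lam k) mod 2^lam k"
      by (simp only: mod_add_left_eq mod_add_right_eq)
    also have "\<dots> = ((x k + y k) + c * (x j + y j)) mod 2^lam k"
      by (simp only: mod_mult_mod_dvd[OF assms(4)] mod_add_right_eq)
    also have "\<dots> = ((x k + c * x j) mod 2^lam k + (y k + c * y j) mod 2^lam k) mod 2^lam k"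
      by (simp add: mod_add_eq algebra_simps)
    finally show ?thesis
      using assms(1,2) unfolding shear_aut_def mult_Gp by (intro restrict_ext) auto
  qed
  show "inj_on (shear_aut n lam j k c) (carrier (Gp n lam))"
  proof (rule inj_onI)
    fix x y
    assume xy: "x \<in> carrier (Gp n lam)" "y \<in> carrier (Gp n lam)"
      "shear_aut n lam j k c x = shear_aut n lam j k c y"
    have other: "x i = y i" if "i \<in> {1..n}" "i \<noteq> k" for i
      using fun_cong[OF xy(3), of i] that by (simp add: shear_aut_def)
    have "(x k + c * x j) mod 2^lam k = (y k + c * x j) mod 2^lam k"
      using fun_cong[OF xy(3), of k] assms other[of j] by (simp add: shear_aut_def)
    hence "x k mod 2^lam k = y k mod 2^lam k"
      by (metis add_diff_cancel_right' mod_diff_left_eq)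
    hence "x k = y k" using Gp_mem_mod xy assms by metis
    thus "x = y" using other by (intro Gp_eqI[OF xy(1,2)]) metis
  qed
qed

lemma scale_aut_quotient:
  assumes "x \<in> carrier (Gp n lam)"
  shows "scale_aut n lam u x \<otimes>\<^bsub>Gp n lam\<^esub> inv\<^bsub>Gp n lam\<^esub> x = (\<lambda>i\<in>{1..n}. ((u i - 1) * x i) mod 2^lam i)"
  unfolding scale_aut_def mult_Gp inv_Gp[OF assms]
  by (rule restrict_ext) (simp add: mod_add_eq algebra_simps)

lemma shear_aut_quotient:
  assumes "x \<in> carrier (Gp n lam)" "k \<in> {1..n}"
  shows "shear_aut n lam j k c x \<otimes>\<^bsub>Gp n lam\<^esub> inv\<^bsub>Gp n lam\<^esub> x = single n k ((c * x j) mod 2^lam k)"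
  unfolding shear_aut_def mult_Gp inv_Gp[OF assms(1)] single_def
proof (rule restrict_ext)
  fix i assume "i \<in> {1..n}"
  have "((x k + c * x j) mod 2^lam k + (- x k) mod 2^lam k) mod 2^lam k = (c * x j) mod 2^lam k"
    unfolding mod_add_eq by simp
  thus "((\<lambda>i\<in>{1..n}. if i = k then (x k + c * x j) mod 2^lam k else x i) i +
      (\<lambda>i\<in>{1..n}. - x i mod 2^lam i) i) mod 2^lam i = (if i = k then c * x j mod 2^lam k else 0)"
    using \<open>i \<in> {1..n}\<close> by (auto simp: mod_add_right_eq)
qed

definition truncation :: "nat \<Rightarrow> (nat \<Rightarrow> int) \<Rightarrow> nat \<Rightarrow> (nat \<Rightarrow> int)" where
  "truncation n g k = (\<lambda>i\<in>{1..n}. if i \<le> k then g i else 0)"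

lemma truncation_in_Gp: "g \<in> carrier (Gp n lam) \<Longrightarrow> truncation n g k \<in> carrier (Gp n lam)"
  by (rule Gp_memI) (auto simp: truncation_def dest: Gp_memD)

lemma truncation_0: "truncation n g 0 = \<one>\<^bsub>Gp n lam\<^esub>"
  unfolding truncation_def one_Gp by (rule restrict_ext) simp

lemma truncation_Suc:
  assumes "g \<in> carrier (Gp n lam)" "Suc k \<le> n"
  shows "truncation n g (Suc k) = truncation n g k \<otimes>\<^bsub>Gp n lam\<^esub> single n (Suc k) (g (Suc k))"
  unfolding truncation_def mult_Gp single_def
  by (rule restrict_ext) (auto simp: Gp_mem_mod[OF assms(1)])

lemma truncation_n: "g \<in> carrier (Gp n lam) \<Longrightarrow> truncation n g n = g"
  by (rule Gp_eqI[OF truncation_in_Gp]) (auto simp: truncation_def)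

lemma subgroup_mem_if_singles:
  assumes H: "subgroup H (Gp n lam)" and g: "g \<in> carrier (Gp n lam)"
    and singles: "\<And>j. j \<in> {1..n} \<Longrightarrow> single n j (g j) \<in> H"
  shows "g \<in> H"
proof -
  have "k \<le> n \<Longrightarrow> truncation n g k \<in> H" for k
  proof (induction k)
    case 0
    show ?case using subgroup.one_closed[OF H] by (simp add: truncation_0[of n g lam])
  next
    case (Suc k)
    thus ?case using singles truncation_Suc[OF g Suc.prems] subgroup.m_closed[OF H] by simp
  qed
  thus ?thesis using truncation_n[OF g] by force
qed

definition hom_coeff :: "nat \<Rightarrow> (nat \<Rightarrow> nat) \<Rightarrow> ((nat \<Rightarrow> int) \<Rightarrow> (nat \<Rightarrow> int)) \<Rightarrow> nat \<Rightarrow> nat \<Rightarrow> int" where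
  "hom_coeff n lam \<phi> j i = \<phi> (single n j (1 mod 2^lam j)) i"

lemma hom_single:
  assumes hom: "\<phi> \<in> hom (Gp n lam) (Gp n lam)" and v: "0 \<le> v" "v < 2^lam j"
  shows "\<phi> (single n j v) = (\<lambda>i\<in>{1..n}. (v * hom_coeff n lam \<phi> j i) mod 2^lam i)"
proof -
  let ?e = "single n j (1 mod 2^lam j)"
  have e: "?e \<in> carrier (Gp n lam)" by (intro single_in_Gp) auto
  have "single n j v = ?e [^]\<^bsub>Gp n lam\<^esub> nat v"
  proof (cases "v = 0")
    case False
    hence "lam j \<noteq> 0" using v by (auto simp: not_less)
    hence "1 mod 2^lam j = (1::int)" by simp
    thus ?thesis using single_pow[of 1 lam j n "nat v"] v by simp
  qed (simp add: single_0)
  hence "\<phi> (single n j v) = \<phi> ?e [^]\<^bsub>Gp n lam\<^esub> nat v"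
    using hom_nat_pow[OF hom e group_Gp group_Gp] by simp
  also have "\<dots> = (\<lambda>i\<in>{1..n}. (v * hom_coeff n lam \<phi> j i) mod 2^lam i)"
    using v hom e by (subst pow_Gp) (auto simp: hom_def hom_coeff_def)
  finally show ?thesis .
qed

lemma hom_Gp_coord:
  assumes hom: "\<phi> \<in> hom (Gp n lam) (Gp n lam)" and g: "g \<in> carrier (Gp n lam)" and i: "i \<in> {1..n}"
  shows "\<phi> g i = (\<Sum>j\<in>{1..n}. g j * hom_coeff n lam \<phi> j i) mod 2^lam i"
proof -
  have "k \<le> n \<Longrightarrow>
      \<phi> (truncation n g k) = (\<lambda>i\<in>{1..n}. (\<Sum>j\<in>{1..k}. g j * hom_coeff n lam \<phi> j i) mod 2^lam i)" for k
  proof (induction k)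
    case 0
    have "\<phi> (truncation n g 0) = \<one>\<^bsub>Gp n lam\<^esub>"
      unfolding truncation_0[of n g lam] by (rule hom_one[OF hom group_Gp group_Gp])
    thus ?case by (simp add: one_Gp)
  next
    case (Suc k)
    have k: "Suc k \<in> {1..n}" using Suc.prems by simp
    note gk = Gp_memD[OF g k]
    have "\<phi> (truncation n g (Suc k)) = \<phi> (truncation n g k) \<otimes>\<^bsub>Gp n lam\<^esub> \<phi> (single n (Suc k) (g (Suc k)))"
      unfolding truncation_Suc[OF g Suc.prems]
      using hom truncation_in_Gp[OF g] single_in_Gp gk by (simp add: hom_def)
    also have "\<dots> = (\<lambda>i\<in>{1..n}. (\<Sum>j\<in>{1..Suc k}. g j * hom_coeff n lam \<phi> j i) mod 2^lam i)"
      unfolding Suc.IH[OF Suc_leD[OF Suc.prems]] hom_single[OF hom gk[THEN conjunct1] gk[THEN conjunct2]] mult_Gp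
      by (rule restrict_ext) (simp add: mod_add_eq)
    finally show ?case .
  qed
  from this[of n] show ?thesis using truncation_n[OF g] i by simp
qed

lemma hom_coeff_dvd:
  assumes hom: "\<phi> \<in> hom (Gp n lam) (Gp n lam)" and i: "i \<in> {1..n}"
  shows "(2::int)^(lam i - lam j) dvd hom_coeff n lam \<phi> j i"
proof (cases "lam j \<le> lam i")
  case True
  let ?e = "single n j (1 mod 2^lam j)" and ?N = "(2::nat)^lam j"
  have e: "?e \<in> carrier (Gp n lam)" by (intro single_in_Gp) auto
  have "\<phi> ?e [^]\<^bsub>Gp n lam\<^esub> ?N = \<phi> (?e [^]\<^bsub>Gp n lam\<^esub> ?N)"
    by (rule hom_nat_pow[OF hom e group_Gp group_Gp, symmetric])
  also have "?e [^]\<^bsub>Gp n lam\<^esub> ?N = \<one>\<^bsub>Gp n lam\<^esub>"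
    using single_pow[of "1 mod 2^lam j" lam j n ?N] by (simp add: mod_mult_right_eq single_0)
  also have "\<phi> \<one>\<^bsub>Gp n lam\<^esub> = \<one>\<^bsub>Gp n lam\<^esub>" by (rule hom_one[OF hom group_Gp group_Gp])
  finally have "\<phi> ?e [^]\<^bsub>Gp n lam\<^esub> ?N = \<one>\<^bsub>Gp n lam\<^esub>" .
  moreover have "\<phi> ?e \<in> carrier (Gp n lam)" using hom e by (auto simp: hom_def)
  ultimately have "(\<lambda>i\<in>{1..n}. (2^lam j * \<phi> ?e i) mod 2^lam i) = (\<lambda>i\<in>{1..n}. (0::int))"
    by (simp add: pow_Gp one_Gp)
  from fun_cong[OF this, of i] i have "(2^lam j * \<phi> ?e i) mod 2^lam i = 0" by simp
  hence "(2::int)^lam i dvd 2^lam j * hom_coeff n lam \<phi> j i"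
    unfolding hom_coeff_def by (simp only: dvd_eq_mod_eq_0)
  moreover have "(2::int)^lam i = 2^lam j * 2^(lam i - lam j)" using True by (simp flip: power_add)
  ultimately show ?thesis by simp
qed simp

lemma pow2_dvd_mult:
  assumes "(2::int)^a dvd x" "(2::int)^b dvd y" "k \<le> a + b"
  shows "(2::int)^k dvd x * y"
proof -
  have "(2::int)^(a + b) dvd x * y" using mult_dvd_mono[OF assms(1,2)] by (simp add: power_add)
  thus ?thesis using assms(3) le_imp_power_dvd dvd_trans by blast
qed

section \<open>Subgroups cut out by exponent bounds\<close>

definition exp_bounded :: "nat \<Rightarrow> (nat \<Rightarrow> nat) \<Rightarrow> (nat \<Rightarrow> nat) \<Rightarrow> (nat \<Rightarrow> int) set" where
  "exp_bounded n lam b = {g \<in> carrier (Gp n lam). \<forall>i\<in>{1..n}. ord_exp (lam i) (g i) \<le> b i}"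

lemma exp_bounded_subset: "exp_bounded n lam b \<subseteq> carrier (Gp n lam)"
  by (auto simp: exp_bounded_def)

lemma exp_bounded_mono: "(\<And>i. i \<in> {1..n} \<Longrightarrow> b i \<le> b' i) \<Longrightarrow> exp_bounded n lam b \<subseteq> exp_bounded n lam b'"
  by (force simp: exp_bounded_def)

lemma subgroup_exp_bounded: "subgroup (exp_bounded n lam b) (Gp n lam)"
proof -
  interpret group "Gp n lam" by (rule group_Gp)
  show ?thesis
  proof (rule subgroupI)
    show "exp_bounded n lam b \<subseteq> carrier (Gp n lam)" by (rule exp_bounded_subset)
    show "exp_bounded n lam b \<noteq> {}"
      using one_closed by (auto simp: exp_bounded_def one_Gp)
  next
    fix x assume x: "x \<in> exp_bounded n lam b"
    show "inv\<^bsub>Gp n lam\<^esub> x \<in> exp_bounded n lam b"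
      using x restrict_mod_in_Gp inv_Gp exp_bounded_subset by (fastforce simp: exp_bounded_def)
  next
    fix x y assume xy: "x \<in> exp_bounded n lam b" "y \<in> exp_bounded n lam b"
    have "ord_exp (lam i) (x i + y i) \<le> b i" if "i \<in> {1..n}" for i
      using xy that by (auto simp: exp_bounded_def ord_exp_le_iff distrib_left)
    thus "x \<otimes>\<^bsub>Gp n lam\<^esub> y \<in> exp_bounded n lam b"
      using xy restrict_mod_in_Gp[where f = "\<lambda>i. x i + y i" and n = n and lam = lam]
      by (auto simp: exp_bounded_def mult_Gp)
  qed
qed

lemma Tset_eq_ord_exp: "Tset n lam a = {g \<in> carrier (Gp n lam). \<forall>i\<in>{1..n}. ord_exp (lam i) (g i) = a i}"
  unfolding Tset_def using Gp_memD ord_integer_mod_group_pow2 by fastforce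

definition Tset_witness :: "nat \<Rightarrow> (nat \<Rightarrow> nat) \<Rightarrow> (nat \<Rightarrow> nat) \<Rightarrow> (nat \<Rightarrow> int)" where
  "Tset_witness n lam a = (\<lambda>i\<in>{1..n}. 2^(lam i - a i) mod 2^lam i)"

lemma Tset_witness_mem: "a \<in> LambdaG n lam \<Longrightarrow> Tset_witness n lam a \<in> Tset n lam a"
  unfolding Tset_eq_ord_exp Tset_witness_def
  using restrict_mod_in_Gp[where f = "\<lambda>i. 2^(lam i - a i)" and n = n and lam = lam]
  by (auto simp: ord_exp_pow2 LambdaG_def)

lemma Tset_zero: "Tset n lam (\<lambda>_. 0) = {\<one>\<^bsub>Gp n lam\<^esub>}"
proof -
  have "\<one>\<^bsub>Gp n lam\<^esub> \<in> Tset n lam (\<lambda>_. 0)"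
    using Tset_witness_mem[of "\<lambda>_. 0" n lam] by (simp add: LambdaG_def Tset_witness_def one_Gp)
  moreover have "g = \<one>\<^bsub>Gp n lam\<^esub>" if "g \<in> Tset n lam (\<lambda>_. 0)" for g
  proof (rule Gp_eqI)
    show g: "g \<in> carrier (Gp n lam)" using that by (simp add: Tset_eq_ord_exp)
    show "\<one>\<^bsub>Gp n lam\<^esub> \<in> carrier (Gp n lam)" by (simp add: group.is_monoid group_Gp)
    show "g i = \<one>\<^bsub>Gp n lam\<^esub> i" if "i \<in> {1..n}" for i
      using that \<open>g \<in> Tset n lam (\<lambda>_. 0)\<close> ord_exp_eq_0_iff Gp_memD[OF g]
      by (auto simp: Tset_eq_ord_exp one_Gp)
  qed
  ultimately show ?thesis by blast
qed

section \<open>Characteristic subgroups below m\<close>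

lemma characteristic_subgroup: "characteristic H G \<Longrightarrow> subgroup H G"
  by (simp add: characteristic_def)

lemma characteristic_aut_mem: "characteristic H G \<Longrightarrow> \<phi> \<in> iso G G \<Longrightarrow> h \<in> H \<Longrightarrow> \<phi> h \<in> H"
  unfolding characteristic_def by blast

lemma characteristic_aut_quotient_mem:
  assumes "group G" "characteristic H G" "\<phi> \<in> iso G G" "h \<in> H"
  shows "\<phi> h \<otimes>\<^bsub>G\<^esub> inv\<^bsub>G\<^esub> h \<in> H"
proof -
  have "subgroup H G" by (rule characteristic_subgroup[OF assms(2)])
  thus ?thesis using characteristic_aut_mem[OF assms(2-4)] assms(4)
    by (simp add: subgroup.m_closed subgroup.m_inv_closed)
qed

text \<open>Elements with the same coordinate exponents differ by an odd scaling automorphism.\<close>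

lemma characteristic_same_exponents_mem:
  assumes ch: "characteristic H (Gp n lam)" and h: "h \<in> H" and g: "g \<in> carrier (Gp n lam)"
    and exps: "\<And>i. i \<in> {1..n} \<Longrightarrow> ord_exp (lam i) (g i) = ord_exp (lam i) (h i)"
  shows "g \<in> H"
proof -
  define u where "u i = (SOME u. odd u \<and> (u * h i) mod 2^lam i = g i mod 2^lam i)" for i
  have u: "odd (u i) \<and> (u i * h i) mod 2^lam i = g i mod 2^lam i" if "i \<in> {1..n}" for i
    unfolding u_def
    by (rule someI_ex) (meson ord_exp_eq_imp_odd_multiple[OF exps[OF that, symmetric]])
  have "scale_aut n lam u h = g"
  proof (rule Gp_eqI[OF _ g])
    show "scale_aut n lam u h \<in> carrier (Gp n lam)" unfolding scale_aut_def by (rule restrict_mod_in_Gp)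
    show "scale_aut n lam u h i = g i" if "i \<in> {1..n}" for i
      using u[OF that] Gp_mem_mod[OF g that] that by (simp add: scale_aut_def)
  qed
  moreover have "scale_aut n lam u \<in> iso (Gp n lam) (Gp n lam)" by (rule scale_aut_iso) (use u in blast)
  ultimately show "g \<in> H" using characteristic_aut_mem[OF ch _ h] by metis
qed

section \<open>Canonical tuples\<close>

lemma mono_on_interval_by_step:
  fixes f :: "nat \<Rightarrow> 'a::preorder"
  assumes step: "\<And>k. k \<in> {2..n} \<Longrightarrow> f (k - 1) \<le> f k" and "1 \<le> i" "i \<le> j" "j \<le> n"
  shows "f i \<le> f j"
  using assms(3,4)
proof (induction j)
  case (Suc k)
  show ?case
  proof (cases "i = Suc k")
    case False
    hence "f i \<le> f k" using Suc by simp
    also have "f k \<le> f (Suc k)" using step[of "Suc k"] Suc.prems False \<open>1 \<le> i\<close> by simp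
    finally show ?thesis .
  qed simp
qed simp

locale canonical_tuple =
  fixes n :: nat and lam m :: "nat \<Rightarrow> nat"
  assumes lam_step: "\<And>i. i \<in> {2..n} \<Longrightarrow> lam (i - 1) \<le> lam i"
    and canonical: "canonical n lam m"
begin

abbreviation "G \<equiv> Gp n lam"

lemma m_le_lam: "i \<in> {1..n} \<Longrightarrow> m i \<le> lam i"
  using canonical by (auto simp: canonical_def LambdaG_def)

lemma m_outside: "i \<notin> {1..n} \<Longrightarrow> m i = 0"
  using canonical by (auto simp: canonical_def LambdaG_def)

lemma m_step: "i \<in> {2..n} \<Longrightarrow> m (i - 1) \<le> m i"
  using canonical by (auto simp: canonical_def)

lemma m_gap_step:
  assumes "k \<in> {2..n}"
  shows "int (m k) - int (m (k - 1)) \<le> int (lam k) - int (lam (k - 1))"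
proof -
  have "k - 1 \<in> {1..n-1}" "k - 1 + 1 = k" using assms by auto
  thus ?thesis using canonical unfolding canonical_def by metis
qed

lemma lam_mono: "1 \<le> i \<Longrightarrow> i \<le> j \<Longrightarrow> j \<le> n \<Longrightarrow> lam i \<le> lam j"
  by (rule mono_on_interval_by_step[where f = lam, OF lam_step])

lemma m_mono: "1 \<le> i \<Longrightarrow> i \<le> j \<Longrightarrow> j \<le> n \<Longrightarrow> m i \<le> m j"
  by (rule mono_on_interval_by_step[where f = m, OF m_step])

lemma m_increase_le_lam_increase:
  "1 \<le> i \<Longrightarrow> i \<le> j \<Longrightarrow> j \<le> n \<Longrightarrow> int (m j) - int (m i) \<le> int (lam j) - int (lam i)"
proof -
  have "int (lam (k - 1)) - int (m (k - 1)) \<le> int (lam k) - int (m k)" if "k \<in> {2..n}" for k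
    using m_gap_step[OF that] by linarith
  moreover assume "1 \<le> i" "i \<le> j" "j \<le> n"
  ultimately have "int (lam i) - int (m i) \<le> int (lam j) - int (m j)"
    by (rule mono_on_interval_by_step[where f = "\<lambda>k. int (lam k) - int (m k)"])
  thus ?thesis by linarith
qed

definition nondeg :: "nat set" where
  "nondeg = {i \<in> {1..n}. \<not> degenerate_at n lam m i}"

lemma nondeg_subset: "nondeg \<subseteq> {1..n}"
  by (auto simp: nondeg_def)

lemma nondeg_m_pos: "i \<in> nondeg \<Longrightarrow> 1 \<le> m i"
  using m_step[of i] by (cases "i = 1") (auto simp: nondeg_def degenerate_at_def prev_def)

lemma nondeg_below:
  assumes "i \<in> nondeg" "1 \<le> j" "j < i"
  shows "lam j < lam i \<and> m j < m i"
proof -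
  have i: "i \<in> {2..n}" "m i \<noteq> m (i - 1)"
    using assms by (auto simp: nondeg_def degenerate_at_def prev_def)
  hence less: "m (i - 1) < m i" using m_step[of i] by simp
  have "int (m i) - int (m (i - 1)) \<le> int (lam i) - int (lam (i - 1))"
    using m_gap_step i by simp
  hence "lam (i - 1) < lam i" using less by linarith
  moreover have "lam j \<le> lam (i - 1)" "m j \<le> m (i - 1)"
    using lam_mono[of j "i - 1"] m_mono[of j "i - 1"] assms i by auto
  ultimately show ?thesis using less by simp
qed

lemma nondeg_above:
  assumes "i \<in> nondeg" "i < j" "j \<le> n"
  shows "int (m j) - int (m i) < int (lam j) - int (lam i)"
proof -
  have i: "i \<in> {1..n-1}" "int (m (i + 1)) - int (m i) \<noteq> int (lam (i + 1)) - int (lam i)"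
    using assms by (auto simp: nondeg_def degenerate_at_def)
  hence "int (m (i + 1)) - int (m i) < int (lam (i + 1)) - int (lam i)"
    using m_gap_step[of "i + 1"] i(1) by force
  moreover have "int (m j) - int (m (i + 1)) \<le> int (lam j) - int (lam (i + 1))"
    using m_increase_le_lam_increase[of "i + 1" j] assms by simp
  ultimately show ?thesis by simp
qed

definition m_lowered :: "nat \<Rightarrow> nat" where
  "m_lowered i = (if i \<in> nondeg then m i - 1 else m i)"

abbreviation "L \<equiv> exp_bounded n lam m"
abbreviation "M \<equiv> exp_bounded n lam m_lowered"

lemma M_subset_L: "M \<subseteq> L"
  by (rule exp_bounded_mono) (simp add: m_lowered_def)

lemma L_dvd: "g \<in> L \<Longrightarrow> j \<in> {1..n} \<Longrightarrow> (2::int)^(lam j - m j) dvd g j"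
  using ord_exp_le_iff_dvd[OF m_le_lam] by (auto simp: exp_bounded_def)

lemma hom_term_dvd:
  assumes hom: "\<phi> \<in> hom G G" and g: "g \<in> L" and i: "i \<in> {1..n}" and j: "j \<in> {1..n}"
  shows "(2::int)^(lam i - m i) dvd g j * hom_coeff n lam \<phi> j i"
proof (rule pow2_dvd_mult[OF L_dvd[OF g j] hom_coeff_dvd[OF hom i]])
  have "m i \<le> lam i" "m j \<le> lam j" using m_le_lam i j by auto
  moreover have "lam j \<le> lam i \<and> m j \<le> m i \<or> lam i \<le> lam j \<and> int (m j) - int (m i) \<le> int (lam j) - int (lam i)"
    using lam_mono m_mono m_increase_le_lam_increase i j by (cases "j \<le> i") auto
  ultimately show "lam i - m i \<le> lam j - m j + (lam i - lam j)" by linarith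
qed

lemma hom_preserves_L:
  assumes hom: "\<phi> \<in> hom G G" and g: "g \<in> L"
  shows "\<phi> g \<in> L"
proof -
  have gc: "g \<in> carrier G" using g exp_bounded_subset by blast
  have "ord_exp (lam i) (\<phi> g i) \<le> m i" if i: "i \<in> {1..n}" for i
  proof -
    have "(2::int)^(lam i - m i) dvd (\<Sum>j\<in>{1..n}. g j * hom_coeff n lam \<phi> j i)"
      by (rule dvd_sum) (rule hom_term_dvd[OF hom g i], simp)
    thus ?thesis unfolding hom_Gp_coord[OF hom gc i] ord_exp_mod ord_exp_le_iff_dvd[OF m_le_lam[OF i]] .
  qed
  moreover have "\<phi> g \<in> carrier G" using hom gc by (auto simp: hom_def)
  ultimately show ?thesis by (simp add: exp_bounded_def)
qed

lemma hom_off_diagonal_dvd: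
  assumes hom: "\<phi> \<in> hom G G" and g: "g \<in> L" and i: "i \<in> nondeg"
  shows "(2::int)^(lam i - m i + 1) dvd (\<Sum>j\<in>{1..n} - {i}. g j * hom_coeff n lam \<phi> j i)"
proof (rule dvd_sum)
  fix j assume j: "j \<in> {1..n} - {i}"
  have i': "i \<in> {1..n}" using i nondeg_subset by auto
  show "(2::int)^(lam i - m i + 1) dvd g j * hom_coeff n lam \<phi> j i"
  proof (rule pow2_dvd_mult[OF L_dvd[OF g] hom_coeff_dvd[OF hom i']])
    have "m i \<le> lam i" "m j \<le> lam j" using m_le_lam i' j by auto
    moreover have "lam j < lam i \<and> m j < m i \<or> int (m j) - int (m i) < int (lam j) - int (lam i)"
      using nondeg_below[OF i] nondeg_above[OF i] j by (cases "j < i") auto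
    ultimately show "lam i - m i + 1 \<le> lam j - m j + (lam i - lam j)" by linarith
  qed (use j in auto)
qed

lemma hom_coord_nondeg:
  assumes hom: "\<phi> \<in> hom G G" and g: "g \<in> L" and i: "i \<in> nondeg"
  obtains r where "\<phi> g i = (g i * hom_coeff n lam \<phi> i i + 2^(lam i - m i + 1) * r) mod 2^lam i"
proof -
  have i': "i \<in> {1..n}" using i nondeg_subset by auto
  obtain r where r: "(\<Sum>j\<in>{1..n} - {i}. g j * hom_coeff n lam \<phi> j i) = 2^(lam i - m i + 1) * r"
    using hom_off_diagonal_dvd[OF assms] by blast
  have "g \<in> carrier G" using g exp_bounded_subset by blast
  hence "\<phi> g i = (\<Sum>j\<in>{1..n}. g j * hom_coeff n lam \<phi> j i) mod 2^lam i" by (rule hom_Gp_coord[OF hom _ i'])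
  also have "(\<Sum>j\<in>{1..n}. g j * hom_coeff n lam \<phi> j i)
      = g i * hom_coeff n lam \<phi> i i + (\<Sum>j\<in>{1..n} - {i}. g j * hom_coeff n lam \<phi> j i)"
    by (rule sum.remove[OF finite_atLeastAtMost i'])
  finally show thesis using that r by simp
qed

lemma aut_diag_coeff_odd:
  assumes iso: "\<phi> \<in> iso G G" and i: "i \<in> nondeg"
  shows "odd (hom_coeff n lam \<phi> i i)"
proof
  assume even: "even (hom_coeff n lam \<phi> i i)"
  have hom: "\<phi> \<in> hom G G" using iso by (simp add: iso_def)
  have i': "i \<in> {1..n}" and mi: "1 \<le> m i" "m i \<le> lam i"
    using i nondeg_subset nondeg_m_pos m_le_lam by auto
  define k where "k = lam i - m i"
  define L' where "L' = {x \<in> L. (2::int)^(k + 1) dvd x i}"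
  have image: "\<phi> ` L \<subseteq> L'"
  proof
    fix y assume "y \<in> \<phi> ` L"
    then obtain g where g: "g \<in> L" "y = \<phi> g" by blast
    obtain r where r: "\<phi> g i = (g i * hom_coeff n lam \<phi> i i + 2^(k + 1) * r) mod 2^lam i"
      using hom_coord_nondeg[OF hom g(1) i] unfolding k_def by blast
    have "(2::int)^1 dvd hom_coeff n lam \<phi> i i" using even by simp
    hence "(2::int)^(k + 1) dvd g i * hom_coeff n lam \<phi> i i"
      using pow2_dvd_mult[OF L_dvd[OF g(1) i']] unfolding k_def by blast
    moreover have "(2::int)^(k + 1) dvd 2^lam i" using mi unfolding k_def pow2_dvd_pow2_iff by simp
    ultimately have "(2::int)^(k + 1) dvd \<phi> g i" unfolding r by (simp add: dvd_mod)
    thus "y \<in> L'" using hom_preserves_L[OF hom g(1)] g unfolding L'_def by simp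
  qed
  have witness: "single n i (2^k) \<in> L - L'"
  proof -
    have "(2::int)^k < 2^lam i" using mi unfolding k_def by simp
    hence "single n i (2^k) \<in> carrier G" by (intro single_in_Gp) auto
    moreover have "ord_exp (lam j) (single n i (2^k) j) \<le> m j" if "j \<in> {1..n}" for j
      using that ord_exp_pow2[OF mi(2)] unfolding single_def k_def by auto
    ultimately show ?thesis using i' unfolding exp_bounded_def L'_def by (auto simp: single_def pow2_dvd_pow2_iff)
  qed
  have fin: "finite L" using finite_carrier_Gp exp_bounded_subset by (rule finite_subset[rotated])
  have "inj_on \<phi> L"
    using iso inj_on_subset[OF _ exp_bounded_subset] by (auto simp: iso_def bij_betw_def)
  hence "card L = card (\<phi> ` L)" by (simp add: card_image)
  also have "\<dots> \<le> card L'" using image fin by (intro card_mono) (auto simp: L'_def)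
  also have "\<dots> < card L" using witness fin by (intro psubset_card_mono) (auto simp: L'_def)
  finally show False by simp
qed

lemma aut_preserves_level_bit:
  assumes iso: "\<phi> \<in> iso G G" and g: "g \<in> L" and i: "i \<in> nondeg"
  shows "level_bit (lam i) (m i) (\<phi> g i) = level_bit (lam i) (m i) (g i)"
proof -
  have hom: "\<phi> \<in> hom G G" using iso by (simp add: iso_def)
  have i': "i \<in> {1..n}" and mi: "1 \<le> m i" "m i \<le> lam i"
    using i nondeg_subset nondeg_m_pos m_le_lam by auto
  define k where "k = lam i - m i"
  obtain r where r: "\<phi> g i = (g i * hom_coeff n lam \<phi> i i + 2^(k + 1) * r) mod 2^lam i"
    using hom_coord_nondeg[OF hom g i] unfolding k_def by blast
  obtain a where a: "g i = 2^k * a" using L_dvd[OF g i'] unfolding k_def by blast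
  have odd: "odd (hom_coeff n lam \<phi> i i)" by (rule aut_diag_coeff_odd[OF iso i])
  have "(2::int)^(k + 1) dvd 2^lam i" using mi unfolding k_def pow2_dvd_pow2_iff by simp
  hence "(2::int)^(k + 1) dvd \<phi> g i \<longleftrightarrow> (2::int)^(k + 1) dvd g i * hom_coeff n lam \<phi> i i"
    unfolding r by (simp add: dvd_mod_iff dvd_add_left_iff)
  also have "\<dots> \<longleftrightarrow> (2::int)^(k + 1) dvd g i" using odd unfolding a by (simp add: mult.assoc)
  finally show ?thesis
    unfolding level_bit_def ord_exp_less_iff_dvd[OF mi] k_def by simp
qed

lemma finite_coordinate_values: "i \<in> {1..n} \<Longrightarrow> finite {a i | a. a \<in> LambdaG n lam \<and> P a}"
  by (rule finite_subset[of _ "{..lam i}"]) (auto simp: LambdaG_def)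

lemma char_below_subgroup: "char_below n lam m H \<Longrightarrow> subgroup H G"
  by (simp add: char_below_def characteristic_def)

lemma char_below_Max_ge:
  assumes "char_below n lam m H" "i \<in> {1..n}" "a \<in> LambdaG n lam" "Tset n lam a \<subseteq> H"
  shows "a i \<le> m i"
proof -
  have "a i \<le> Max {a i | a. a \<in> LambdaG n lam \<and> Tset n lam a \<subseteq> H}"
    by (rule Max_ge[OF finite_coordinate_values[OF assms(2)]]) (use assms in blast)
  thus ?thesis using assms(1,2) unfolding char_below_def by simp
qed

lemma char_below_attained:
  assumes cb: "char_below n lam m H" and i: "i \<in> {1..n}"
  obtains h where "h \<in> H" "ord_exp (lam i) (h i) = m i"
proof -
  let ?S = "{a i | a. a \<in> LambdaG n lam \<and> Tset n lam a \<subseteq> H}"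
  have "Tset n lam (\<lambda>_. 0) \<subseteq> H"
    using Tset_zero subgroup.one_closed[OF char_below_subgroup[OF cb]] by simp
  hence "?S \<noteq> {}" by (force simp: LambdaG_def)
  hence "Max ?S \<in> ?S" by (rule Max_in[OF finite_coordinate_values[OF i]])
  moreover have "m i = Max ?S" using cb i unfolding char_below_def by blast
  ultimately obtain a where a: "a \<in> LambdaG n lam" "Tset n lam a \<subseteq> H" "a i = m i" by auto
  show thesis
    using that[of "Tset_witness n lam a"] Tset_witness_mem[OF a(1)] a(2,3) i
    by (auto simp: Tset_eq_ord_exp)
qed

lemma char_below_subset_L:
  assumes cb: "char_below n lam m H"
  shows "H \<subseteq> L"
proof
  fix h assume h: "h \<in> H"
  have hc: "h \<in> carrier G" using h subgroup.subset[OF char_below_subgroup[OF cb]] by blast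
  define a where "a = (\<lambda>i. if i \<in> {1..n} then ord_exp (lam i) (h i) else 0)"
  have a: "a \<in> LambdaG n lam" by (auto simp: a_def LambdaG_def ord_exp_le)
  have "Tset n lam a \<subseteq> H"
    using cb h by (auto simp: Tset_eq_ord_exp a_def char_below_def intro: characteristic_same_exponents_mem)
  hence "a i \<le> m i" if "i \<in> {1..n}" for i using char_below_Max_ge[OF cb that a] by blast
  thus "h \<in> L" using hc by (simp add: exp_bounded_def a_def)
qed

lemma char_below_aut_quotient_mem:
  assumes "char_below n lam m H" "\<phi> \<in> iso G G" "h \<in> H"
  shows "\<phi> h \<otimes>\<^bsub>G\<^esub> inv\<^bsub>G\<^esub> h \<in> H"
  using characteristic_aut_quotient_mem[OF group_Gp _ assms(2,3)] assms(1) by (simp add: char_below_def)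

lemma char_below_single_nondeg:
  assumes cb: "char_below n lam m H" and j: "j \<in> nondeg"
  obtains y where "0 \<le> y" "y < 2^lam j" "ord_exp (lam j) y = m j - 1" "single n j y \<in> H"
proof -
  have j': "j \<in> {1..n}" using j nondeg_subset by auto
  obtain h where h: "h \<in> H" "ord_exp (lam j) (h j) = m j" using char_below_attained[OF cb j'] .
  have hc: "h \<in> carrier G" using h(1) subgroup.subset[OF char_below_subgroup[OF cb]] by blast
  define u where "u i = (if i = j then -1 else 1::int)" for i
  have "scale_aut n lam u \<in> iso G G" by (rule scale_aut_iso) (simp add: u_def)
  hence "scale_aut n lam u h \<otimes>\<^bsub>G\<^esub> inv\<^bsub>G\<^esub> h \<in> H" using char_below_aut_quotient_mem[OF cb _ h(1)] by blast
  moreover have "scale_aut n lam u h \<otimes>\<^bsub>G\<^esub> inv\<^bsub>G\<^esub> h = single n j ((-2 * h j) mod 2^lam j)"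
    unfolding scale_aut_quotient[OF hc] single_def by (rule restrict_ext) (simp add: u_def)
  moreover have "ord_exp (lam j) ((-2 * h j) mod 2^lam j) = m j - 1"
    unfolding ord_exp_mod ord_exp_minus_double h(2) ..
  ultimately show thesis using that[of "(-2 * h j) mod 2^lam j"] by simp
qed

lemma char_below_single_right_degenerate:
  assumes cb: "char_below n lam m H" and j: "j \<in> {1..n-1}"
    and gap: "int (m (j + 1)) - int (m j) = int (lam (j + 1)) - int (lam j)"
  obtains y where "0 \<le> y" "y < 2^lam j" "ord_exp (lam j) y = m j" "single n j y \<in> H"
proof -
  have j': "j \<in> {1..n}" "j + 1 \<in> {1..n}" using j by auto
  obtain h where h: "h \<in> H" "ord_exp (lam (j + 1)) (h (j + 1)) = m (j + 1)"
    using char_below_attained[OF cb j'(2)] .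
  have hc: "h \<in> carrier G" using h(1) subgroup.subset[OF char_below_subgroup[OF cb]] by blast
  have lam: "lam j \<le> lam (j + 1)" using lam_mono[of j "j + 1"] j by auto
  have "shear_aut n lam (j + 1) j 1 \<in> iso G G"
    using j' lam by (intro shear_aut_iso) (auto simp: pow2_dvd_pow2_iff)
  hence "shear_aut n lam (j + 1) j 1 h \<otimes>\<^bsub>G\<^esub> inv\<^bsub>G\<^esub> h \<in> H"
    using char_below_aut_quotient_mem[OF cb _ h(1)] by blast
  moreover have "shear_aut n lam (j + 1) j 1 h \<otimes>\<^bsub>G\<^esub> inv\<^bsub>G\<^esub> h = single n j ((1 * h (j + 1)) mod 2^lam j)"
    by (rule shear_aut_quotient[OF hc j'(1)])
  moreover have "ord_exp (lam j) ((1 * h (j + 1)) mod 2^lam j) = m j"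
    using ord_exp_smaller_modulus[OF lam, of "h (j + 1)"] h(2) gap lam by simp
  ultimately show thesis using that[of "h (j + 1) mod 2^lam j"] by simp
qed

lemma char_below_single_left_degenerate:
  assumes cb: "char_below n lam m H" and j: "j \<in> {2..n}" and eq: "m j = m (j - 1)"
  obtains y where "0 \<le> y" "y < 2^lam j" "ord_exp (lam j) y = m j" "single n j y \<in> H"
proof -
  have j': "j \<in> {1..n}" "j - 1 \<in> {1..n}" "j - 1 \<noteq> j" using j by auto
  obtain h where h: "h \<in> H" "ord_exp (lam (j - 1)) (h (j - 1)) = m (j - 1)"
    using char_below_attained[OF cb j'(2)] .
  have hc: "h \<in> carrier G" using h(1) subgroup.subset[OF char_below_subgroup[OF cb]] by blast
  have lam: "lam (j - 1) \<le> lam j" using lam_mono[of "j - 1" j] j by auto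
  define c where "c = (2::int)^(lam j - lam (j - 1))"
  have "c * 2^lam (j - 1) = 2^lam j" unfolding c_def using lam by (simp flip: power_add)
  hence "shear_aut n lam (j - 1) j c \<in> iso G G" using j' by (intro shear_aut_iso) auto
  hence "shear_aut n lam (j - 1) j c h \<otimes>\<^bsub>G\<^esub> inv\<^bsub>G\<^esub> h \<in> H"
    using char_below_aut_quotient_mem[OF cb _ h(1)] by blast
  moreover have "shear_aut n lam (j - 1) j c h \<otimes>\<^bsub>G\<^esub> inv\<^bsub>G\<^esub> h = single n j ((c * h (j - 1)) mod 2^lam j)"
    by (rule shear_aut_quotient[OF hc j'(1)])
  moreover have "ord_exp (lam j) ((c * h (j - 1)) mod 2^lam j) = m j"
    unfolding ord_exp_mod c_def ord_exp_pow2_mult[OF lam] h(2) eq ..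
  ultimately show thesis using that[of "(c * h (j - 1)) mod 2^lam j"] by simp
qed

lemma char_below_single:
  assumes cb: "char_below n lam m H" and j: "j \<in> {1..n}"
  obtains y where "0 \<le> y" "y < 2^lam j" "m_lowered j \<le> ord_exp (lam j) y" "single n j y \<in> H"
proof (cases "j \<in> nondeg")
  case True
  obtain y where "0 \<le> y" "y < 2^lam j" "ord_exp (lam j) y = m j - 1" "single n j y \<in> H"
    using char_below_single_nondeg[OF cb True] .
  thus thesis using True by (intro that) (auto simp: m_lowered_def)
next
  case False
  hence m: "m_lowered j = m j" by (simp add: m_lowered_def)
  from False j consider "m j = prev m j"
    | "j \<in> {1..n-1}" "int (m (j + 1)) - int (m j) = int (lam (j + 1)) - int (lam j)"
    by (auto simp: nondeg_def degenerate_at_def)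
  thus thesis
  proof cases
    case 1
    show thesis
    proof (cases "j = 1")
      case True
      hence "m_lowered j = 0" using 1 m by (simp add: prev_def)
      thus thesis using that[of 0] subgroup.one_closed[OF char_below_subgroup[OF cb]] by (simp add: single_0[of n j lam])
    next
      case False
      hence "j \<in> {2..n}" "m j = m (j - 1)" using 1 j by (auto simp: prev_def)
      then obtain y where "0 \<le> y" "y < 2^lam j" "ord_exp (lam j) y = m j" "single n j y \<in> H"
        by (rule char_below_single_left_degenerate[OF cb])
      thus thesis using m by (intro that) auto
    qed
  next
    case 2
    obtain y where "0 \<le> y" "y < 2^lam j" "ord_exp (lam j) y = m j" "single n j y \<in> H"
      by (rule char_below_single_right_degenerate[OF cb 2])
    thus thesis using m by (intro that) auto
  qed
qed

lemma M_subset_char_below: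
  assumes cb: "char_below n lam m H"
  shows "M \<subseteq> H"
proof
  fix g assume g: "g \<in> M"
  have gc: "g \<in> carrier G" using g exp_bounded_subset by blast
  show "g \<in> H"
  proof (rule subgroup_mem_if_singles[OF char_below_subgroup[OF cb] gc])
    fix j assume j: "j \<in> {1..n}"
    obtain y where y: "0 \<le> y" "y < 2^lam j" "m_lowered j \<le> ord_exp (lam j) y" "single n j y \<in> H"
      using char_below_single[OF cb j] .
    have "ord_exp (lam j) (g j) \<le> ord_exp (lam j) y" using g j y(3) by (force simp: exp_bounded_def)
    then obtain c where c: "(c * y) mod 2^lam j = g j mod 2^lam j" by (rule ord_exp_le_imp_multiple)
    have "single n j y [^]\<^bsub>G\<^esub> nat (c mod 2^lam j) = single n j (g j)"
      unfolding single_pow[where lam = lam and j = j, OF y(1,2)] using c Gp_mem_mod[OF gc j]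
      by (simp add: mod_mult_left_eq)
    thus "single n j (g j) \<in> H"
      using subgroup_nat_pow_closed[OF group_Gp char_below_subgroup[OF cb] y(4)] by metis
  qed
qed

end

section \<open>The correspondence with subgroups of Z_2^r\<close>

lemma carrier_Z2pow: "carrier (Z2pow r) = (\<Pi>\<^sub>E t\<in>{1..r}. {0..<2})"
  by (simp add: Z2pow_def carrier_integer_mod_group)

lemma mult_Z2pow: "x \<otimes>\<^bsub>Z2pow r\<^esub> y = (\<lambda>t\<in>{1..r}. (x t + y t) mod 2)"
  by (simp add: Z2pow_def)

lemma one_Z2pow: "\<one>\<^bsub>Z2pow r\<^esub> = (\<lambda>t\<in>{1..r}. 0)"
  by (simp add: Z2pow_def)

lemma group_Z2pow: "group (Z2pow r)"
  by (simp add: Z2pow_def)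

lemma Z2pow_memD: "k \<in> carrier (Z2pow r) \<Longrightarrow> t \<in> {1..r} \<Longrightarrow> k t = 0 \<or> k t = 1"
proof -
  assume "k \<in> carrier (Z2pow r)" "t \<in> {1..r}"
  hence "0 \<le> k t \<and> k t < 2" by (auto simp: carrier_Z2pow PiE_iff)
  thus ?thesis by arith
qed

lemma Z2pow_eqI:
  "x \<in> carrier (Z2pow r) \<Longrightarrow> y \<in> carrier (Z2pow r) \<Longrightarrow> (\<And>t. t \<in> {1..r} \<Longrightarrow> x t = y t) \<Longrightarrow> x = y"
  unfolding carrier_Z2pow by (rule PiE_ext)

lemma Z2pow_mult_self: "k \<in> carrier (Z2pow r) \<Longrightarrow> k \<otimes>\<^bsub>Z2pow r\<^esub> k = \<one>\<^bsub>Z2pow r\<^esub>"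
  unfolding mult_Z2pow one_Z2pow by (rule restrict_ext) (auto dest: Z2pow_memD)

lemma Z2pow_inv: "k \<in> carrier (Z2pow r) \<Longrightarrow> inv\<^bsub>Z2pow r\<^esub> k = k"
  using group.inv_equality[OF group_Z2pow Z2pow_mult_self] by blast

locale nondeg_enumeration = canonical_tuple +
  fixes \<sigma> :: "nat \<Rightarrow> nat" and r :: nat
  assumes \<sigma>_bij: "bij_betw \<sigma> {1..r} nondeg"
begin

lemma \<sigma>_nondeg: "t \<in> {1..r} \<Longrightarrow> \<sigma> t \<in> nondeg"
  using \<sigma>_bij by (rule bij_betw_apply)

lemma \<sigma>_bounds: "t \<in> {1..r} \<Longrightarrow> \<sigma> t \<in> {1..n} \<and> 1 \<le> m (\<sigma> t) \<and> m (\<sigma> t) \<le> lam (\<sigma> t)"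
  using \<sigma>_nondeg nondeg_subset nondeg_m_pos m_le_lam by blast

definition level_bits :: "(nat \<Rightarrow> int) \<Rightarrow> (nat \<Rightarrow> int)" where
  "level_bits g = (\<lambda>t\<in>{1..r}. level_bit (lam (\<sigma> t)) (m (\<sigma> t)) (g (\<sigma> t)))"

lemma level_bits_in_Z2pow: "level_bits g \<in> carrier (Z2pow r)"
  by (auto simp: carrier_Z2pow level_bits_def level_bit_def)

lemma level_bits_mult:
  assumes "g \<in> L" "h \<in> L"
  shows "level_bits (g \<otimes>\<^bsub>G\<^esub> h) = level_bits g \<otimes>\<^bsub>Z2pow r\<^esub> level_bits h"
  unfolding level_bits_def mult_Z2pow
proof (rule restrict_ext)
  fix t assume t: "t \<in> {1..r}"
  note i = \<sigma>_bounds[OF t]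
  have "ord_exp (lam (\<sigma> t)) (g (\<sigma> t)) \<le> m (\<sigma> t)" "ord_exp (lam (\<sigma> t)) (h (\<sigma> t)) \<le> m (\<sigma> t)"
    using assms i by (auto simp: exp_bounded_def)
  thus "level_bit (lam (\<sigma> t)) (m (\<sigma> t)) ((g \<otimes>\<^bsub>G\<^esub> h) (\<sigma> t)) =
      ((\<lambda>t\<in>{1..r}. level_bit (lam (\<sigma> t)) (m (\<sigma> t)) (g (\<sigma> t))) t
        + (\<lambda>t\<in>{1..r}. level_bit (lam (\<sigma> t)) (m (\<sigma> t)) (h (\<sigma> t))) t) mod 2"
    using t i level_bit_add by (simp add: mult_Gp)
qed

lemma level_bits_inv: "g \<in> carrier G \<Longrightarrow> level_bits (inv\<^bsub>G\<^esub> g) = level_bits g"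
  unfolding level_bits_def inv_Gp
  by (rule restrict_ext) (use \<sigma>_bounds in \<open>auto simp: level_bit_def\<close>)

lemma level_bits_one: "level_bits \<one>\<^bsub>G\<^esub> = \<one>\<^bsub>Z2pow r\<^esub>"
  unfolding level_bits_def one_Z2pow one_Gp
  by (rule restrict_ext) (use \<sigma>_bounds in \<open>fastforce simp: level_bit_def\<close>)

lemma mem_M_iff_level_bits:
  assumes g: "g \<in> L"
  shows "g \<in> M \<longleftrightarrow> level_bits g = \<one>\<^bsub>Z2pow r\<^esub>"
proof -
  have "level_bits g = \<one>\<^bsub>Z2pow r\<^esub> \<longleftrightarrow> (\<forall>t\<in>{1..r}. ord_exp (lam (\<sigma> t)) (g (\<sigma> t)) < m (\<sigma> t))"
    by (auto simp: level_bits_def one_Z2pow level_bit_def fun_eq_iff restrict_def split: if_splits)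
  also have "\<dots> \<longleftrightarrow> (\<forall>i\<in>nondeg. ord_exp (lam i) (g i) < m i)"
    unfolding bij_betw_imp_surj_on[OF \<sigma>_bij, symmetric] by blast
  also have "\<dots> \<longleftrightarrow> g \<in> M"
    using g nondeg_m_pos nondeg_subset by (force simp: exp_bounded_def m_lowered_def)
  finally show ?thesis ..
qed

definition bits_exponents :: "(nat \<Rightarrow> int) \<Rightarrow> (nat \<Rightarrow> nat)" where
  "bits_exponents k j = (if j \<in> \<sigma> ` {t \<in> {1..r}. k t = 1} then m j else 0)"

lemma bits_exponents_in_LambdaG: "bits_exponents k \<in> LambdaG n lam"
  unfolding LambdaG_def bits_exponents_def using m_le_lam m_outside by auto

lemma Tset_bits_exponents:
  assumes k: "k \<in> carrier (Z2pow r)" and g: "g \<in> Tset n lam (bits_exponents k)"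
  shows "g \<in> L" "level_bits g = k"
proof -
  have gc: "g \<in> carrier G" and exps: "\<And>i. i \<in> {1..n} \<Longrightarrow> ord_exp (lam i) (g i) = bits_exponents k i"
    using g by (auto simp: Tset_eq_ord_exp)
  show "g \<in> L" using gc exps by (auto simp: exp_bounded_def bits_exponents_def)
  show "level_bits g = k"
  proof (rule Z2pow_eqI[OF level_bits_in_Z2pow k])
    fix t assume t: "t \<in> {1..r}"
    note i = \<sigma>_bounds[OF t]
    have "\<sigma> t \<in> \<sigma> ` {s \<in> {1..r}. k s = 1} \<longleftrightarrow> k t = 1"
      using t bij_betw_imp_inj_on[OF \<sigma>_bij] by (auto dest: inj_onD)
    thus "level_bits g t = k t"
      using t i exps[of "\<sigma> t"] Z2pow_memD[OF k t] by (auto simp: level_bits_def level_bit_def bits_exponents_def)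
  qed
qed

lemma level_bits_surj:
  assumes "k \<in> carrier (Z2pow r)"
  obtains g where "g \<in> L" "level_bits g = k"
  using Tset_bits_exponents[OF assms Tset_witness_mem[OF bits_exponents_in_LambdaG]] by blast

lemma level_bits_eq_imp_quotient_in_M:
  assumes g: "g \<in> L" and h: "h \<in> L" and eq: "level_bits g = level_bits h"
  shows "g \<otimes>\<^bsub>G\<^esub> inv\<^bsub>G\<^esub> h \<in> M"
proof -
  have hi: "inv\<^bsub>G\<^esub> h \<in> L" using subgroup.m_inv_closed[OF subgroup_exp_bounded h] .
  have hc: "h \<in> carrier G" using h exp_bounded_subset by blast
  have "level_bits (g \<otimes>\<^bsub>G\<^esub> inv\<^bsub>G\<^esub> h) = level_bits h \<otimes>\<^bsub>Z2pow r\<^esub> level_bits h"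
    unfolding level_bits_mult[OF g hi] level_bits_inv[OF hc] eq ..
  also have "\<dots> = \<one>\<^bsub>Z2pow r\<^esub>" by (rule Z2pow_mult_self[OF level_bits_in_Z2pow])
  finally show ?thesis
    using mem_M_iff_level_bits subgroup.m_closed[OF subgroup_exp_bounded g hi] by blast
qed

definition level_bits_preimage :: "(nat \<Rightarrow> int) set \<Rightarrow> (nat \<Rightarrow> int) set" where
  "level_bits_preimage K = {g \<in> L. level_bits g \<in> K}"

lemma level_bits_preimage_image:
  assumes cb: "char_below n lam m H"
  shows "level_bits_preimage (level_bits ` H) = H"
proof
  show "H \<subseteq> level_bits_preimage (level_bits ` H)"
    using char_below_subset_L[OF cb] by (auto simp: level_bits_preimage_def)
next
  show "level_bits_preimage (level_bits ` H) \<subseteq> H"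
  proof
    fix g assume "g \<in> level_bits_preimage (level_bits ` H)"
    then obtain h where g: "g \<in> L" and h: "h \<in> H" and eq: "level_bits g = level_bits h"
      by (auto simp: level_bits_preimage_def)
    interpret group G by (rule group_Gp)
    have sg: "subgroup H G" by (rule char_below_subgroup[OF cb])
    have hL: "h \<in> L" using char_below_subset_L[OF cb] h by blast
    have "g \<otimes>\<^bsub>G\<^esub> inv\<^bsub>G\<^esub> h \<in> H"
      using level_bits_eq_imp_quotient_in_M[OF g hL eq] M_subset_char_below[OF cb] by blast
    hence "(g \<otimes>\<^bsub>G\<^esub> inv\<^bsub>G\<^esub> h) \<otimes>\<^bsub>G\<^esub> h \<in> H" using subgroup.m_closed[OF sg _ h] by blast
    moreover have "g \<in> carrier G" "h \<in> carrier G" using g hL exp_bounded_subset by blast+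
    ultimately show "g \<in> H" by (simp add: m_assoc)
  qed
qed

lemma level_bits_image_preimage:
  assumes "subgroup K (Z2pow r)"
  shows "level_bits ` level_bits_preimage K = K"
proof
  show "level_bits ` level_bits_preimage K \<subseteq> K" by (auto simp: level_bits_preimage_def)
  show "K \<subseteq> level_bits ` level_bits_preimage K"
  proof
    fix k assume k: "k \<in> K"
    then obtain g where "g \<in> L" "level_bits g = k"
      using level_bits_surj subgroup.mem_carrier[OF assms] by metis
    thus "k \<in> level_bits ` level_bits_preimage K" using k by (auto simp: level_bits_preimage_def)
  qed
qed

lemma proj_surjective_level_bits_image:
  assumes cb: "char_below n lam m H"
  shows "proj_surjective r (level_bits ` H)"
proof -
  have sg: "subgroup H G" by (rule char_below_subgroup[OF cb])
  have HL: "H \<subseteq> L" by (rule char_below_subset_L[OF cb])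
  have "subgroup (level_bits ` H) (Z2pow r)"
  proof (rule group.subgroupI[OF group_Z2pow])
    show "level_bits ` H \<subseteq> carrier (Z2pow r)" using level_bits_in_Z2pow by blast
    show "level_bits ` H \<noteq> {}" using subgroup.one_closed[OF sg] by blast
    show "inv\<^bsub>Z2pow r\<^esub> k \<in> level_bits ` H" if "k \<in> level_bits ` H" for k
      using that Z2pow_inv[OF level_bits_in_Z2pow] by force
  next
    fix k k' assume "k \<in> level_bits ` H" "k' \<in> level_bits ` H"
    then obtain g g' where g: "g \<in> H" "g' \<in> H" and k: "k = level_bits g" "k' = level_bits g'" by blast
    have "k \<otimes>\<^bsub>Z2pow r\<^esub> k' = level_bits (g \<otimes>\<^bsub>G\<^esub> g')"
      unfolding k using g HL by (simp add: level_bits_mult subset_iff)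
    thus "k \<otimes>\<^bsub>Z2pow r\<^esub> k' \<in> level_bits ` H" using subgroup.m_closed[OF sg g] by blast
  qed
  moreover have "(\<lambda>k. k t) ` level_bits ` H = carrier (integer_mod_group 2)" if t: "t \<in> {1..r}" for t
  proof -
    have "(\<lambda>k. k t) ` level_bits ` H \<subseteq> {0, 1}" using Z2pow_memD[OF level_bits_in_Z2pow t] by auto
    moreover have "level_bits \<one>\<^bsub>G\<^esub> t = 0" using level_bits_one t by (simp add: one_Z2pow)
    hence "0 \<in> (\<lambda>k. k t) ` level_bits ` H" using subgroup.one_closed[OF sg] by (metis image_eqI)
    moreover obtain h where h: "h \<in> H" "ord_exp (lam (\<sigma> t)) (h (\<sigma> t)) = m (\<sigma> t)"
      using char_below_attained[OF cb] \<sigma>_bounds[OF t] by blast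
    have "level_bits h t = 1" using t h(2) by (simp add: level_bits_def level_bit_def)
    hence "1 \<in> (\<lambda>k. k t) ` level_bits ` H" using h(1) by (metis image_eqI)
    ultimately have "(\<lambda>k. k t) ` level_bits ` H = {0, 1}" by blast
    also have "{0, 1} = carrier (integer_mod_group 2)" by (auto simp: carrier_integer_mod_group)
    finally show ?thesis .
  qed
  ultimately show ?thesis by (simp add: proj_surjective_def)
qed

lemma M_subset_level_bits_preimage: "subgroup K (Z2pow r) \<Longrightarrow> M \<subseteq> level_bits_preimage K"
  using M_subset_L mem_M_iff_level_bits subgroup.one_closed by (fastforce simp: level_bits_preimage_def)

lemma subgroup_level_bits_preimage:
  assumes K: "subgroup K (Z2pow r)"
  shows "subgroup (level_bits_preimage K) G"
proof (rule group.subgroupI[OF group_Gp])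
  show "level_bits_preimage K \<subseteq> carrier G"
    using exp_bounded_subset by (auto simp: level_bits_preimage_def)
  show "level_bits_preimage K \<noteq> {}"
    using M_subset_level_bits_preimage[OF K] subgroup.one_closed[OF subgroup_exp_bounded] by blast
next
  fix g assume "g \<in> level_bits_preimage K"
  hence g: "g \<in> L" "level_bits g \<in> K" by (auto simp: level_bits_preimage_def)
  thus "inv\<^bsub>G\<^esub> g \<in> level_bits_preimage K"
    using subgroup.m_inv_closed[OF subgroup_exp_bounded g(1)] level_bits_inv[of g]
      subsetD[OF exp_bounded_subset g(1)]
    by (auto simp: level_bits_preimage_def)
next
  fix g h assume "g \<in> level_bits_preimage K" "h \<in> level_bits_preimage K"
  hence "g \<in> L" "h \<in> L" "level_bits g \<in> K" "level_bits h \<in> K" by (auto simp: level_bits_preimage_def)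
  thus "g \<otimes>\<^bsub>G\<^esub> h \<in> level_bits_preimage K"
    using subgroup.m_closed[OF subgroup_exp_bounded] subgroup.m_closed[OF K]
    by (auto simp: level_bits_preimage_def level_bits_mult)
qed

text \<open>Automorphisms map each preimage into itself; finiteness makes this an equality.\<close>

lemma characteristic_level_bits_preimage:
  assumes K: "subgroup K (Z2pow r)"
  shows "characteristic (level_bits_preimage K) G"
  unfolding characteristic_def
proof (intro conjI ballI)
  show sg: "subgroup (level_bits_preimage K) G" by (rule subgroup_level_bits_preimage[OF K])
  fix \<phi> assume iso: "\<phi> \<in> iso G G"
  hence hom: "\<phi> \<in> hom G G" by (simp add: iso_def)
  have "\<phi> g \<in> level_bits_preimage K" if "g \<in> level_bits_preimage K" for g
  proof -
    have g: "g \<in> L" "level_bits g \<in> K" using that by (auto simp: level_bits_preimage_def)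
    have "level_bits (\<phi> g) = level_bits g"
      unfolding level_bits_def
      by (rule restrict_ext) (simp add: aut_preserves_level_bit[OF iso g(1)] \<sigma>_nondeg)
    thus ?thesis using hom_preserves_L[OF hom g(1)] g(2)
      by (simp add: level_bits_preimage_def)
  qed
  moreover have "inj_on \<phi> (level_bits_preimage K)"
    using iso subgroup.subset[OF sg] by (auto simp: iso_def bij_betw_def intro: inj_on_subset)
  moreover have "finite (level_bits_preimage K)"
    using finite_carrier_Gp subgroup.subset[OF sg] by (rule finite_subset[rotated])
  ultimately show "\<phi> ` level_bits_preimage K = level_bits_preimage K"
    using endo_inj_surj by blast
qed

lemma level_bits_preimage_attains:
  assumes K: "proj_surjective r K" and i: "i \<in> {1..n}"
  obtains a where "a \<in> LambdaG n lam" "Tset n lam a \<subseteq> level_bits_preimage K" "a i = m i"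
proof (cases "i \<in> nondeg")
  case False
  define a where "a j = (if j = i then m i else 0)" for j
  have a: "a \<in> LambdaG n lam" using m_le_lam i by (auto simp: a_def LambdaG_def)
  have "Tset n lam a \<subseteq> M"
  proof
    fix g assume "g \<in> Tset n lam a"
    hence "g \<in> carrier G" "\<And>j. j \<in> {1..n} \<Longrightarrow> ord_exp (lam j) (g j) = a j"
      by (auto simp: Tset_eq_ord_exp)
    moreover have "a j \<le> m_lowered j" for j using False by (simp add: a_def m_lowered_def)
    ultimately show "g \<in> M" by (simp add: exp_bounded_def)
  qed
  also have "M \<subseteq> level_bits_preimage K"
    using K by (intro M_subset_level_bits_preimage) (simp add: proj_surjective_def)
  finally show thesis using that a by (simp add: a_def)
next
  case True
  hence "i \<in> \<sigma> ` {1..r}" using bij_betw_imp_surj_on[OF \<sigma>_bij] by simp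
  then obtain t where t: "t \<in> {1..r}" "\<sigma> t = i" by (rule imageE) simp
  have "1 \<in> (\<lambda>k. k t) ` K" using K t by (simp add: proj_surjective_def carrier_integer_mod_group)
  then obtain k where k: "k \<in> K" "k t = 1" by auto
  have "subgroup K (Z2pow r)" using K by (simp add: proj_surjective_def)
  hence kc: "k \<in> carrier (Z2pow r)" using k(1) by (rule subgroup.mem_carrier)
  have "Tset n lam (bits_exponents k) \<subseteq> level_bits_preimage K"
    using Tset_bits_exponents[OF kc] k(1) by (auto simp: level_bits_preimage_def)
  moreover have "i \<in> \<sigma> ` {s \<in> {1..r}. k s = 1}" by (rule image_eqI[where x = t]) (use t k in auto)
  hence "bits_exponents k i = m i" by (simp add: bits_exponents_def)
  ultimately show thesis by (rule that[OF bits_exponents_in_LambdaG])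
qed

lemma char_below_level_bits_preimage:
  assumes K: "proj_surjective r K"
  shows "char_below n lam m (level_bits_preimage K)"
  unfolding char_below_def
proof (intro conjI ballI)
  show "characteristic (level_bits_preimage K) G"
    using K by (intro characteristic_level_bits_preimage) (simp add: proj_surjective_def)
  fix i assume i: "i \<in> {1..n}"
  show "m i = Max {a i | a. a \<in> LambdaG n lam \<and> Tset n lam a \<subseteq> level_bits_preimage K}"
  proof (rule sym, rule Max_eqI[OF finite_coordinate_values[OF i]])
    fix y assume "y \<in> {a i | a. a \<in> LambdaG n lam \<and> Tset n lam a \<subseteq> level_bits_preimage K}"
    then obtain a where a: "y = a i" "a \<in> LambdaG n lam" "Tset n lam a \<subseteq> level_bits_preimage K" by blast
    have "Tset_witness n lam a \<in> L"
      using Tset_witness_mem[OF a(2)] a(3) by (auto simp: level_bits_preimage_def)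
    thus "y \<le> m i" using Tset_witness_mem[OF a(2)] i a(1) by (auto simp: Tset_eq_ord_exp exp_bounded_def)
  next
    obtain a where "a \<in> LambdaG n lam" "Tset n lam a \<subseteq> level_bits_preimage K" "a i = m i"
      using level_bits_preimage_attains[OF K i] .
    thus "m i \<in> {a i | a. a \<in> LambdaG n lam \<and> Tset n lam a \<subseteq> level_bits_preimage K}"
      by (intro CollectI exI[of _ a]) simp
  qed
qed

theorem bij_betw_char_below_proj_surjective:
  "bij_betw (\<lambda>H. level_bits ` H) {H. char_below n lam m H} {K. proj_surjective r K}"
proof (rule bij_betw_byWitness[where f' = level_bits_preimage])
  show "\<forall>H\<in>{H. char_below n lam m H}. level_bits_preimage (level_bits ` H) = H"
    by (simp add: level_bits_preimage_image)
  show "\<forall>K\<in>{K. proj_surjective r K}. level_bits ` level_bits_preimage K = K"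
    by (simp add: level_bits_image_preimage proj_surjective_def)
  show "(\<lambda>H. level_bits ` H) ` {H. char_below n lam m H} \<subseteq> {K. proj_surjective r K}"
    using proj_surjective_level_bits_image by blast
  show "level_bits_preimage ` {K. proj_surjective r K} \<subseteq> {H. char_below n lam m H}"
    using char_below_level_bits_preimage by blast
qed

end

theorem mainTheorem4:
  fixes n :: nat and lam m :: "nat \<Rightarrow> nat"
  assumes "\<And>i. i \<in> {2..n} \<Longrightarrow> lam (i - 1) \<le> lam i"
    and "canonical n lam m"
  shows "\<exists>f. bij_betw f {H. char_below n lam m H}
                        {K. proj_surjective (nondeg_count n lam m) K}"
proof -
  interpret canonical_tuple n lam m using assms by (rule canonical_tuple.intro)
  have "finite nondeg" using nondeg_subset by (rule finite_subset) simp
  then obtain \<sigma> where \<sigma>: "bij_betw \<sigma> {1..card nondeg} nondeg"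
    using ex_bij_betw_nat_finite_1 by blast
  interpret nondeg_enumeration n lam m \<sigma> "card nondeg"
    by unfold_locales (rule \<sigma>)
  have "nondeg_count n lam m = card nondeg" by (simp add: nondeg_count_def nondeg_def)
  thus ?thesis using bij_betw_char_below_proj_surjective by auto
qed

end
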